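(* Let $(X,Y,R)$ be a random triple with $X\in\mathbb{R}^d$, $Y\in\{0,1\}$, $R\in\{0,1\}$, $0<P(R=1)<1$, such that all conditional probabilities $P(R=r\mid Y=y,X=x)$ and $P(Y=y\mid R=r,X=x)$ are well defined and in $(0,1)$. Let $T:\mathbb{R}^d\to\mathbb{R}^k$ be measurable, $\theta^\star=(\alpha_0^\star,\alpha_1^\star,\beta_0^\star,\beta_1^\star)$, $\omega(x,y;\theta^\star)=\exp(\alpha_y^\star+{\beta_y^\star}^\top T(x))$, $\eta_r(x,y;\theta^\star)=P(R=1)/\{P(R=1)+\omega(x,y;\theta^\star)P(R=0)\}$ and $\gamma(1\mid x;\theta^\star)=(\alpha_1^\star-\alpha_0^\star)+(\beta_1^\star-\beta_0^\star)^\top T(x)$. Let $$\gamma(y\mid x)=\log\Big\{\frac{P(R=0\mid Y=y,X=x)\,P(R=1\mid Y=0,X=x)}{P(R=1\mid Y=y,X=x)\,P(R=0\mid Y=0,X=x)}\Big\}.$$ If $\gamma(1\mid x)=\gamma(1\mid x;\theta^\star)$ for all $x$, then for any function $\nu:\mathbb{R}^d\times\{0,1\}\to\mathbb{R}$, $$\frac{\mathbb{E}\big[R\big(\frac{1}{\eta_r(X,Y;\theta^\star)}-1\big)\nu(X,Y)\bigm| X\big]}{\mathbb{E}\big[R\big(\frac{1}{\eta_r(X,Y;\theta^\star)}-1\big)\bigm| X\big]}=\mathbb{E}[\nu(X,Y)\mid X,R=0].$$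
   Context: $R=1$ indicates that $Y$ is observed and $R=0$ that it is missing. *)

theory Defs
  imports "HOL-Probability.Probability"
begin

text \<open>Joint law of (X,Y,R) described through a version p x y r of the conditional
 probability P(Y = y, R = r | X = x) (a regular conditional distribution).\<close>

definition is_cond_pmf ::
  "'a measure \<Rightarrow> ('a \<Rightarrow> 'x::topological_space) \<Rightarrow> ('a \<Rightarrow> nat) \<Rightarrow> ('a \<Rightarrow> nat)
   \<Rightarrow> ('x \<Rightarrow> nat \<Rightarrow> nat \<Rightarrow> real) \<Rightarrow> bool" where
  "is_cond_pmf M X Y R p \<longleftrightarrow>
     (\<forall>y r. (\<lambda>x. p x y r) \<in> borel_measurable borel \<and> (\<forall>x. 0 \<le> p x y r) \<and>
        (\<forall>A \<in> sets borel.
           measure M {w \<in> space M. X w \<in> A \<and> Y w = y \<and> R w = r}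
             = (\<integral>x. indicator A x * p x y r \<partial>(distr M borel X))))"

definition condR :: "('x \<Rightarrow> nat \<Rightarrow> nat \<Rightarrow> real) \<Rightarrow> nat \<Rightarrow> nat \<Rightarrow> 'x \<Rightarrow> real" where
  "condR p r y x = p x y r / (p x y 0 + p x y 1)"

definition condY :: "('x \<Rightarrow> nat \<Rightarrow> nat \<Rightarrow> real) \<Rightarrow> nat \<Rightarrow> nat \<Rightarrow> 'x \<Rightarrow> real" where
  "condY p y r x = p x y r / (p x 0 r + p x 1 r)"

definition gammaR :: "('x \<Rightarrow> nat \<Rightarrow> nat \<Rightarrow> real) \<Rightarrow> nat \<Rightarrow> 'x \<Rightarrow> real" where
  "gammaR p y x = ln ((condR p 0 y x * condR p 1 0 x) / (condR p 1 y x * condR p 0 0 x))"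

definition omega :: "('x \<Rightarrow> real^'k) \<Rightarrow> real \<Rightarrow> real \<Rightarrow> real^'k \<Rightarrow> real^'k \<Rightarrow> 'x \<Rightarrow> nat \<Rightarrow> real" where
  "omega T a0 a1 b0 b1 x y =
     exp ((if y = 1 then a1 else a0) + (if y = 1 then b1 else b0) \<bullet> T x)"

definition eta_r :: "real \<Rightarrow> real \<Rightarrow> ('x \<Rightarrow> real^'k) \<Rightarrow> real \<Rightarrow> real \<Rightarrow> real^'k \<Rightarrow> real^'k
     \<Rightarrow> 'x \<Rightarrow> nat \<Rightarrow> real" where
  "eta_r P1 P0 T a0 a1 b0 b1 x y = P1 / (P1 + omega T a0 a1 b0 b1 x y * P0)"

definition gamma_par :: "('x \<Rightarrow> real^'k) \<Rightarrow> real \<Rightarrow> real \<Rightarrow> real^'k \<Rightarrow> real^'k \<Rightarrow> 'x \<Rightarrow> real" where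
  "gamma_par T a0 a1 b0 b1 x = (a1 - a0) + (b1 - b0) \<bullet> T x"

end

theory Submission
  imports Defs
begin

(* Conditioning on X, the event {R = 1} contributes p(X,y,1) h(X,y) for each value y of Y,
   so E[R h(X,Y) | X] = sum_y p(X,y,1) h(X,y).  Since 1/eta_r - 1 = (P(R=0)/P(R=1)) omega, both
   conditional expectations are such sums with weights p(X,y,1) omega(X,y).  The hypothesis
   gamma(1|x) = gamma(1|x;theta) says precisely that p(x,y,1) omega(x,y) is proportional to
   p(x,y,0) as a function of y, so the quotient is the p(x,.,0)-weighted mean of nu(x,.),
   i.e. E[nu(X,Y) | X, R = 0]. *)

lemma integrable_cond_pmf:
  assumes "prob_space M" and "X \<in> borel_measurable M" and "is_cond_pmf M X Y R p"
  shows "integrable (distr M borel X) (\<lambda>x. p x y r)"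
proof -
  let ?Q = "distr M borel X"
  interpret Q: prob_space ?Q using assms by (simp add: prob_space.prob_space_distr)
  have [measurable]: "(\<lambda>x. p x y r) \<in> borel_measurable borel" and nonneg: "\<And>x. 0 \<le> p x y r"
    and law: "\<And>A. A \<in> sets borel \<Longrightarrow> measure M {w \<in> space M. X w \<in> A \<and> Y w = y \<and> R w = r}
             = (\<integral>x. indicator A x * p x y r \<partial>?Q)"
    using assms(3) unfolding is_cond_pmf_def by auto
  \<comment> \<open>The law of \<open>p\<close> is stated with Bochner integrals, which are 0 for non-integrable
    functions, so integrability comes from monotone convergence of the bounded truncations.\<close>
  define f where "f n x = ennreal (indicator {x. p x y r \<le> real n} x * p x y r)" for n x
  have inc: "incseq f"
    unfolding f_def incseq_def le_fun_def by (auto intro!: ennreal_leI simp: indicator_def nonneg)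
  have meas: "\<And>n. f n \<in> borel_measurable ?Q" unfolding f_def by measurable
  have sup: "(SUP n. f n x) = ennreal (p x y r)" for x
  proof (rule antisym)
    show "(SUP n. f n x) \<le> ennreal (p x y r)"
      by (rule SUP_least) (auto simp: f_def indicator_def nonneg)
    obtain n :: nat where "p x y r \<le> real n" using real_arch_simple by blast
    then have "f n x = ennreal (p x y r)" by (simp add: f_def)
    then show "ennreal (p x y r) \<le> (SUP n. f n x)" by (metis SUP_upper UNIV_I)
  qed
  have "(\<integral>\<^sup>+x. ennreal (p x y r) \<partial>?Q) = (SUP n. integral\<^sup>N ?Q (f n))"
    using nn_integral_monotone_convergence_SUP[OF inc meas] sup by simp
  also have "\<dots> \<le> 1"
  proof (rule SUP_least)
    fix n
    have "integrable ?Q (\<lambda>x. indicator {x. p x y r \<le> real n} x * p x y r)"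
      by (rule Q.integrable_const_bound[where B="real n"]) (auto simp: indicator_def nonneg)
    then have "integral\<^sup>N ?Q (f n) = ennreal (\<integral>x. indicator {x. p x y r \<le> real n} x * p x y r \<partial>?Q)"
      unfolding f_def by (rule nn_integral_eq_integral) (auto simp: nonneg)
    also have "\<dots> = ennreal (measure M {w \<in> space M. X w \<in> {x. p x y r \<le> real n} \<and> Y w = y \<and> R w = r})"
      by (subst law) auto
    also have "\<dots> \<le> 1" using prob_space.prob_le_1[OF assms(1)] by simp
    finally show "integral\<^sup>N ?Q (f n) \<le> 1" .
  qed
  finally show ?thesis by (intro integrableI_nonneg) (auto simp: nonneg top.not_eq_extremum le_less_trans)
qed

lemma distr_restrict_eq_density_cond_pmf:
  assumes "prob_space M" and [measurable]: "X \<in> borel_measurable M"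
    and [measurable]: "Y \<in> measurable M (count_space UNIV)" "R \<in> measurable M (count_space UNIV)"
    and cp: "is_cond_pmf M X Y R p"
  shows "distr (density M (\<lambda>w. ennreal (indicator {w \<in> space M. Y w = y \<and> R w = r} w))) borel X
       = density (distr M borel X) (\<lambda>x. ennreal (p x y r))"
proof (rule measure_eqI)
  let ?S = "{w \<in> space M. Y w = y \<and> R w = r}" and ?Q = "distr M borel X"
  interpret M: prob_space M by fact
  have [measurable]: "(\<lambda>x. p x y r) \<in> borel_measurable borel" and nonneg: "\<And>x. 0 \<le> p x y r"
    and law: "\<And>A. A \<in> sets borel \<Longrightarrow> measure M {w \<in> space M. X w \<in> A \<and> Y w = y \<and> R w = r}
             = (\<integral>x. indicator A x * p x y r \<partial>?Q)"
    using cp unfolding is_cond_pmf_def by auto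
  fix A assume "A \<in> sets (distr (density M (\<lambda>w. ennreal (indicator ?S w))) borel X)"
  then have [measurable]: "A \<in> sets borel" by simp
  have "emeasure (distr (density M (\<lambda>w. ennreal (indicator ?S w))) borel X) A = emeasure M (?S \<inter> (X -` A \<inter> space M))"
    by (simp add: emeasure_distr ennreal_indicator emeasure_restricted)
  also have "?S \<inter> (X -` A \<inter> space M) = {w \<in> space M. X w \<in> A \<and> Y w = y \<and> R w = r}" by auto
  also have "emeasure M \<dots> = ennreal (\<integral>x. indicator A x * p x y r \<partial>?Q)"
    by (simp add: M.emeasure_eq_measure law)
  also have "\<dots> = (\<integral>\<^sup>+x. ennreal (indicator A x * p x y r) \<partial>?Q)"
    using integrable_mult_indicator[OF _ integrable_cond_pmf[OF assms(1,2) cp], of A y r]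
    by (intro nn_integral_eq_integral[symmetric]) (auto simp: nonneg)
  also have "\<dots> = emeasure (density ?Q (\<lambda>x. ennreal (p x y r))) A"
    by (simp add: emeasure_density ennreal_mult' ennreal_indicator mult.commute)
  finally show "emeasure (distr (density M (\<lambda>w. ennreal (indicator ?S w))) borel X) A
      = emeasure (density ?Q (\<lambda>x. ennreal (p x y r))) A" .
qed simp

lemma integral_event_eq_integral_cond_pmf:
  assumes "prob_space M" and [measurable]: "X \<in> borel_measurable M"
    and [measurable]: "Y \<in> measurable M (count_space UNIV)" "R \<in> measurable M (count_space UNIV)"
    and cp: "is_cond_pmf M X Y R p" and [measurable]: "\<phi> \<in> borel_measurable borel"
    and int: "integrable M (\<lambda>w. indicator {w \<in> space M. Y w = y \<and> R w = r} w * \<phi> (X w))"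
  shows "integrable (distr M borel X) (\<lambda>x. p x y r * \<phi> x)"
    and "(\<integral>w. indicator {w \<in> space M. Y w = y \<and> R w = r} w * \<phi> (X w) \<partial>M)
       = (\<integral>x. p x y r * \<phi> x \<partial>distr M borel X)"
proof -
  let ?S = "{w \<in> space M. Y w = y \<and> R w = r}"
  note law = distr_restrict_eq_density_cond_pmf[OF assms(1-5), of y r]
  have [measurable]: "(\<lambda>x. p x y r) \<in> borel_measurable borel" and nonneg: "\<And>x. 0 \<le> p x y r"
    using cp unfolding is_cond_pmf_def by auto
  have "integrable (distr (density M (\<lambda>w. ennreal (indicator ?S w))) borel X) \<phi>"
    by (subst integrable_distr_eq) (auto simp: integrable_density int)
  then show "integrable (distr M borel X) (\<lambda>x. p x y r * \<phi> x)"
    unfolding law by (subst (asm) integrable_density) (auto simp: nonneg)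
  have "(\<integral>w. indicator ?S w * \<phi> (X w) \<partial>M) = (\<integral>w. \<phi> (X w) \<partial>density M (\<lambda>w. ennreal (indicator ?S w)))"
    by (subst integral_density) auto
  also have "\<dots> = (\<integral>x. \<phi> x \<partial>distr (density M (\<lambda>w. ennreal (indicator ?S w))) borel X)"
    by (subst integral_distr) auto
  also have "\<dots> = (\<integral>x. p x y r * \<phi> x \<partial>distr M borel X)"
    unfolding law by (subst integral_density) (auto simp: nonneg)
  finally show "(\<integral>w. indicator ?S w * \<phi> (X w) \<partial>M) = (\<integral>x. p x y r * \<phi> x \<partial>distr M borel X)" .
qed

lemma set_integral_preimage_cond_pmf:
  assumes "prob_space M" and [measurable]: "X \<in> borel_measurable M"
    and [measurable]: "Y \<in> measurable M (count_space UNIV)" "R \<in> measurable M (count_space UNIV)"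
    and vals: "\<forall>w \<in> space M. Y w \<in> {0, 1} \<and> R w \<in> {0, 1}"
    and cp: "is_cond_pmf M X Y R p"
    and hm: "\<forall>y \<in> {0,1}. (\<lambda>x. h x y) \<in> borel_measurable borel"
    and int: "integrable M (\<lambda>w. real (R w) * h (X w) (Y w))"
    and [measurable]: "B \<in> sets borel"
  shows "integrable (distr M borel X) (\<lambda>x. indicator B x * (\<Sum>y\<in>{0,1}. p x y 1 * h x y))"
    and "(\<integral>w \<in> X -` B \<inter> space M. real (R w) * h (X w) (Y w) \<partial>M)
       = (\<integral>x. indicator B x * (\<Sum>y\<in>{0,1}. p x y 1 * h x y) \<partial>distr M borel X)"
proof -
  let ?f = "\<lambda>w. real (R w) * h (X w) (Y w)"
  define \<psi> where "\<psi> = (\<lambda>y w. indicator {w \<in> space M. Y w = y \<and> R w = 1} w * (indicator B (X w) * h (X w) y))"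
  have transfer: "integrable (distr M borel X) (\<lambda>x. p x y 1 * (indicator B x * h x y))
      \<and> integrable M (\<psi> y) \<and> integral\<^sup>L M (\<psi> y) = (\<integral>x. p x y 1 * (indicator B x * h x y) \<partial>distr M borel X)"
    if y: "y \<in> {0,1}" for y
  proof -
    have [measurable]: "(\<lambda>x. h x y) \<in> borel_measurable borel" using hm y by auto
    have "{w \<in> space M. X w \<in> B \<and> Y w = y} \<in> sets M" by measurable
    from integrable_mult_indicator[OF this int]
    have "integrable M (\<psi> y)"
      by (rule Bochner_Integration.integrable_cong[THEN iffD1, OF refl, rotated])
        (use vals in \<open>auto simp: \<psi>_def indicator_def\<close>)
    then show ?thesis
      using integral_event_eq_integral_cond_pmf[OF assms(1-4) cp, of "\<lambda>x. indicator B x * h x y" y 1]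
      by (simp add: \<psi>_def)
  qed
  then show "integrable (distr M borel X) (\<lambda>x. indicator B x * (\<Sum>y\<in>{0,1}. p x y 1 * h x y))"
    by (simp add: algebra_simps)
  have "(\<integral>w \<in> X -` B \<inter> space M. ?f w \<partial>M) = (\<integral>w. (\<Sum>y\<in>{0,1}. \<psi> y w) \<partial>M)"
    unfolding set_lebesgue_integral_def
    by (rule Bochner_Integration.integral_cong[OF refl]) (use vals in \<open>auto simp: \<psi>_def indicator_def\<close>)
  also have "\<dots> = (\<Sum>y\<in>{0,1}. \<integral>x. p x y 1 * (indicator B x * h x y) \<partial>distr M borel X)"
    using transfer by (simp add: Bochner_Integration.integral_sum)
  also have "\<dots> = (\<integral>x. indicator B x * (\<Sum>y\<in>{0,1}. p x y 1 * h x y) \<partial>distr M borel X)"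
    using transfer by (simp add: Bochner_Integration.integral_sum[symmetric] algebra_simps)
  finally show "(\<integral>w \<in> X -` B \<inter> space M. ?f w \<partial>M)
       = (\<integral>x. indicator B x * (\<Sum>y\<in>{0,1}. p x y 1 * h x y) \<partial>distr M borel X)" .
qed

lemma real_cond_exp_cond_pmf:
  assumes "prob_space M" and [measurable]: "X \<in> borel_measurable M"
    and "Y \<in> measurable M (count_space UNIV)" "R \<in> measurable M (count_space UNIV)"
    and "\<forall>w \<in> space M. Y w \<in> {0, 1} \<and> R w \<in> {0, 1}"
    and cp: "is_cond_pmf M X Y R p"
    and hm: "\<forall>y \<in> {0,1}. (\<lambda>x. h x y) \<in> borel_measurable borel"
    and int: "integrable M (\<lambda>w. real (R w) * h (X w) (Y w))"
  shows "AE w in M. real_cond_exp M (vimage_algebra (space M) X borel) (\<lambda>w. real (R w) * h (X w) (Y w)) w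
     = (\<Sum>y\<in>{0,1}. p (X w) y 1 * h (X w) y)"
proof -
  let ?F = "vimage_algebra (space M) X borel"
  let ?g = "\<lambda>x. \<Sum>y\<in>{0,1}. p x y 1 * h x y"
  interpret M: prob_space M by fact
  have Xf: "X \<in> space M \<rightarrow> space borel" by simp
  interpret finite_measure_subalgebra M ?F
    by unfold_locales (auto simp: subalgebra_def sets_vimage_algebra2[OF Xf])
  note set_integral = set_integral_preimage_cond_pmf[OF assms]
  have g_meas[measurable]: "?g \<in> borel_measurable borel"
    using hm cp unfolding is_cond_pmf_def by (intro borel_measurable_sum borel_measurable_times) auto
  have "integrable (distr M borel X) ?g"
    using set_integral(1)[of UNIV] by simp
  then have g_int: "integrable M (\<lambda>w. ?g (X w))"
    by (simp only: integrable_distr_eq[OF assms(2) g_meas])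
  have g_F: "(\<lambda>w. ?g (X w)) \<in> borel_measurable ?F"
    by (rule measurable_compose[OF measurable_vimage_algebra1[OF Xf]]) measurable
  show ?thesis
  proof (rule real_cond_exp_charact[OF _ int g_int g_F])
    fix A assume "A \<in> sets ?F"
    then obtain B where B[measurable]: "B \<in> sets borel" and A: "A = X -` B \<inter> space M"
      by (auto simp: sets_vimage_algebra2[OF Xf])
    have "(\<integral>x. indicator B x * ?g x \<partial>distr M borel X) = (\<integral>w \<in> A. ?g (X w) \<partial>M)"
      unfolding A set_lebesgue_integral_def
      by (subst integral_distr[OF assms(2)], measurable)
        (auto intro!: Bochner_Integration.integral_cong simp: indicator_def simp del: sum.insert)
    with set_integral(2)[OF B] show "(\<integral>w \<in> A. real (R w) * h (X w) (Y w) \<partial>M) = (\<integral>w \<in> A. ?g (X w) \<partial>M)"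
      unfolding A by simp
  qed
qed

lemma cond_pmf_pos:
  assumes "is_cond_pmf M X Y R p" and "0 < condR p r y x"
  shows "0 < p x y r"
proof -
  have "0 \<le> p x y r" using assms(1) unfolding is_cond_pmf_def by blast
  moreover have "p x y r \<noteq> 0" using assms(2) unfolding condR_def by auto
  ultimately show ?thesis by simp
qed

lemma sum_weighted_mean_rescale:
  fixes q s n :: "'b \<Rightarrow> 'a::field"
  assumes "\<And>y. y \<in> S \<Longrightarrow> q y = k * s y" and "k \<noteq> 0"
  shows "(\<Sum>y\<in>S. q y * n y) / (\<Sum>y\<in>S. q y) = (\<Sum>y\<in>S. s y * n y) / (\<Sum>y\<in>S. s y)"
  using assms by (simp add: mult.assoc sum_distrib_left[symmetric])

lemma gammaR_1_eq_ln_odds_ratio: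
  assumes "p x 0 0 + p x 0 1 \<noteq> 0" and "p x 1 0 + p x 1 1 \<noteq> 0"
  shows "gammaR p 1 x = ln (p x 1 0 * p x 0 1 / (p x 1 1 * p x 0 0))"
  using assms by (simp add: gammaR_def condR_def divide_simps)

lemma exp_gamma_par: "exp (gamma_par T a0 a1 b0 b1 x) = omega T a0 a1 b0 b1 x 1 / omega T a0 a1 b0 b1 x 0"
  by (simp add: gamma_par_def omega_def exp_diff[symmetric] inner_diff_left algebra_simps)

lemma inverse_eta_r_minus_one:
  assumes "0 < P1" and "0 \<le> P0"
  shows "1 / eta_r P1 P0 T a0 a1 b0 b1 x y - 1 = P0 / P1 * omega T a0 a1 b0 b1 x y"
proof -
  have "0 < P1 + omega T a0 a1 b0 b1 x y * P0"
    using assms by (simp add: omega_def add_pos_nonneg)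
  then show ?thesis using assms(1) by (simp add: eta_r_def field_simps)
qed

lemma cond_pmf_tilt_proportional:
  assumes pos: "\<And>y r. y \<in> {0,1} \<Longrightarrow> r \<in> {0,1} \<Longrightarrow> 0 < p x y r"
    and gamma: "gammaR p 1 x = gamma_par T a0 a1 b0 b1 x" and y: "y \<in> {0,1}"
  shows "p x y 1 * omega T a0 a1 b0 b1 x y = p x 0 1 * omega T a0 a1 b0 b1 x 0 / p x 0 0 * p x y 0"
proof -
  let ?\<omega> = "omega T a0 a1 b0 b1 x"
  have p: "0 < p x 0 0" "0 < p x 0 1" "0 < p x 1 0" "0 < p x 1 1" using pos by auto
  have "ln (p x 1 0 * p x 0 1 / (p x 1 1 * p x 0 0)) = gamma_par T a0 a1 b0 b1 x"
    using gamma gammaR_1_eq_ln_odds_ratio[of p x] p by simp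
  then have "p x 1 0 * p x 0 1 / (p x 1 1 * p x 0 0) = exp (gamma_par T a0 a1 b0 b1 x)"
    using p by (metis exp_ln divide_pos_pos mult_pos_pos)
  also have "\<dots> = ?\<omega> 1 / ?\<omega> 0" by (rule exp_gamma_par)
  finally have "p x 1 0 * p x 0 1 * ?\<omega> 0 = ?\<omega> 1 * p x 1 1 * p x 0 0"
    using p by (simp add: omega_def field_simps)
  then have "p x 1 1 * ?\<omega> 1 = p x 0 1 * ?\<omega> 0 / p x 0 0 * p x 1 0"
    using p by (simp add: field_simps)
  with y p show ?thesis by auto
qed

lemma tilted_mean_eq_missing_mean:
  assumes pos: "\<And>y r. y \<in> {0,1} \<Longrightarrow> r \<in> {0,1} \<Longrightarrow> 0 < p x y r"
    and gamma: "gammaR p 1 x = gamma_par T a0 a1 b0 b1 x" and "c \<noteq> 0"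
  shows "(\<Sum>y\<in>{0,1}. p x y 1 * (c * omega T a0 a1 b0 b1 x y * \<nu> x y))
       / (\<Sum>y\<in>{0,1}. p x y 1 * (c * omega T a0 a1 b0 b1 x y))
     = (\<Sum>y\<in>{0,1}. condY p y 0 x * \<nu> x y)"
proof -
  let ?\<omega> = "omega T a0 a1 b0 b1 x"
  let ?k = "c * (p x 0 1 * ?\<omega> 0 / p x 0 0)"
  have k: "?k \<noteq> 0" using pos[of 0 0] pos[of 0 1] \<open>c \<noteq> 0\<close> by (simp add: omega_def)
  have tilt: "p x y 1 * (c * ?\<omega> y) = ?k * p x y 0" if "y \<in> {0,1}" for y
    using cond_pmf_tilt_proportional[OF pos gamma that] by (metis mult.assoc mult.left_commute)
  have "(\<Sum>y\<in>{0,1}. p x y 1 * (c * ?\<omega> y) * \<nu> x y) / (\<Sum>y\<in>{0,1}. p x y 1 * (c * ?\<omega> y))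
     = (\<Sum>y\<in>{0,1}. p x y 0 * \<nu> x y) / (\<Sum>y\<in>{0,1}. p x y 0)"
    by (rule sum_weighted_mean_rescale[OF tilt k])
  then show ?thesis by (simp add: condY_def mult.assoc add_divide_distrib)
qed

theorem lemma11:
  fixes M :: "'a measure"
    and X :: "'a \<Rightarrow> real^'d" and Y R :: "'a \<Rightarrow> nat"
    and p :: "real^'d \<Rightarrow> nat \<Rightarrow> nat \<Rightarrow> real"
    and T :: "real^'d \<Rightarrow> real^'k"
    and a0 a1 :: real and b0 b1 :: "real^'k"
    and \<nu> :: "real^'d \<Rightarrow> nat \<Rightarrow> real"
  assumes "prob_space M"
    and "X \<in> borel_measurable M"
    and "Y \<in> measurable M (count_space UNIV)" and "R \<in> measurable M (count_space UNIV)"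
    and "\<forall>w \<in> space M. Y w \<in> {0, 1} \<and> R w \<in> {0, 1}"
    and "0 < measure M {w \<in> space M. R w = 1}" and "measure M {w \<in> space M. R w = 1} < 1"
    and "is_cond_pmf M X Y R p"
    and "\<forall>x. \<forall>y \<in> {0,1}. \<forall>r \<in> {0,1}. 0 < condR p r y x \<and> condR p r y x < 1"
    and "\<forall>x. \<forall>y \<in> {0,1}. \<forall>r \<in> {0,1}. 0 < condY p y r x \<and> condY p y r x < 1"
    and "T \<in> borel_measurable borel"
    and "\<forall>x. gammaR p 1 x = gamma_par T a0 a1 b0 b1 x"
    and "\<forall>y \<in> {0,1}. (\<lambda>x. \<nu> x y) \<in> borel_measurable borel"
    and "integrable M (\<lambda>w. real (R w) *
           (1 / eta_r (measure M {w \<in> space M. R w = 1}) (measure M {w \<in> space M. R w = 0})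
                  T a0 a1 b0 b1 (X w) (Y w) - 1) * \<nu> (X w) (Y w))"
    and "integrable M (\<lambda>w. real (R w) *
           (1 / eta_r (measure M {w \<in> space M. R w = 1}) (measure M {w \<in> space M. R w = 0})
                  T a0 a1 b0 b1 (X w) (Y w) - 1))"
  shows "AE w in M.
     real_cond_exp M (vimage_algebra (space M) X borel)
        (\<lambda>w. real (R w) *
           (1 / eta_r (measure M {w \<in> space M. R w = 1}) (measure M {w \<in> space M. R w = 0})
                  T a0 a1 b0 b1 (X w) (Y w) - 1) * \<nu> (X w) (Y w)) w
     / real_cond_exp M (vimage_algebra (space M) X borel)
        (\<lambda>w. real (R w) *
           (1 / eta_r (measure M {w \<in> space M. R w = 1}) (measure M {w \<in> space M. R w = 0})
                  T a0 a1 b0 b1 (X w) (Y w) - 1)) w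
     = (\<Sum>y \<in> {0,1}. condY p y 0 (X w) * \<nu> (X w) y)"
proof -
  interpret M: prob_space M by fact
  let ?P1 = "measure M {w \<in> space M. R w = 1}" and ?P0 = "measure M {w \<in> space M. R w = 0}"
  let ?\<omega> = "omega T a0 a1 b0 b1"
  have "{w \<in> space M. R w = 0} = space M - {w \<in> space M. R w = 1}" using assms(5) by auto
  then have "?P0 = 1 - ?P1" using assms(4) by (simp add: M.prob_compl)
  then have c: "0 < ?P0 / ?P1" using assms(6,7) by simp
  have eta: "1 / eta_r ?P1 ?P0 T a0 a1 b0 b1 x y - 1 = ?P0 / ?P1 * ?\<omega> x y" for x y
    using c assms(6) by (intro inverse_eta_r_minus_one) (auto simp: zero_less_divide_iff)
  have pos: "0 < p x y r" if "y \<in> {0,1}" "r \<in> {0,1}" for x y r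
    using assms(9) that by (blast intro: cond_pmf_pos[OF assms(8)])
  have [measurable]: "(\<lambda>x. ?\<omega> x y) \<in> borel_measurable borel" for y
    using assms(11) unfolding omega_def by measurable
  have num: "AE w in M. real_cond_exp M (vimage_algebra (space M) X borel)
        (\<lambda>w. real (R w) * (?P0 / ?P1 * ?\<omega> (X w) (Y w) * \<nu> (X w) (Y w))) w
      = (\<Sum>y\<in>{0,1}. p (X w) y 1 * (?P0 / ?P1 * ?\<omega> (X w) y * \<nu> (X w) y))"
    using assms(13) assms(14)[unfolded eta]
    by (intro real_cond_exp_cond_pmf[OF assms(1-5,8)]) (auto simp: mult.assoc)
  have den: "AE w in M. real_cond_exp M (vimage_algebra (space M) X borel)
        (\<lambda>w. real (R w) * (?P0 / ?P1 * ?\<omega> (X w) (Y w))) w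
      = (\<Sum>y\<in>{0,1}. p (X w) y 1 * (?P0 / ?P1 * ?\<omega> (X w) y))"
    using assms(15)[unfolded eta] by (intro real_cond_exp_cond_pmf[OF assms(1-5,8)]) auto
  have mean: "\<And>x. (\<Sum>y\<in>{0,1}. p x y 1 * (?P0 / ?P1 * ?\<omega> x y * \<nu> x y))
       / (\<Sum>y\<in>{0,1}. p x y 1 * (?P0 / ?P1 * ?\<omega> x y)) = (\<Sum>y\<in>{0,1}. condY p y 0 x * \<nu> x y)"
    using c by (intro tilted_mean_eq_missing_mean[OF pos assms(12)[rule_format]]) auto
  have assoc: "(\<lambda>w. real (R w) * (?P0 / ?P1 * ?\<omega> (X w) (Y w)) * \<nu> (X w) (Y w))
      = (\<lambda>w. real (R w) * (?P0 / ?P1 * ?\<omega> (X w) (Y w) * \<nu> (X w) (Y w)))"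
    by (simp only: mult.assoc)
  from num den show ?thesis
    unfolding eta assoc by eventually_elim (simp only: mean)
qed

end
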